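(* For $z\in(0,\tfrac14)$ and $x\in[0,1]$, the function $f(z,x)=\sum_{n\ge0}P_n(x)z^n$ is given by $$f(z,x)=\Big[\sqrt{2zx+1-2z}\;S\Big(\sqrt{\tfrac{2zx+1-2z}{1-2z}}\Big)\Big]^{-1}.$$
   Context: The polynomials $P_n,Q_n$ on $[0,1]$ are defined by $Q_0=P_0=1$, $Q_{n+1}(x)=\sum_{m=0}^n\big[\int_x^1Q_m(t)dt\big]Q_{n-m}(x)$, $P_{n+1}(x)=\sum_{m=0}^n\big[\int_0^xP_m(t)dt+\int_x^1Q_m(t)dt\big]P_{n-m}(x)$. Let $T(t)=\int_t^1\frac{s\,ds}{s^2-s+1}=-\tfrac12\log(t^2-t+1)-\tfrac{\sqrt3}{3}\big[\arctan\big(\tfrac{2t-1}{\sqrt3}\big)-\tfrac{\pi}{6}\big]$; $t\mapsto e^{T(t)}$ is a strictly decreasing bijection $[0,\infty)\to(0,e^{\sqrt3\pi/9}]$, and $S$ denotes its inverse function. *)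

theory Defs
  imports "HOL-Analysis.Analysis"
begin

fun Qp :: "nat \<Rightarrow> real \<Rightarrow> real" where
  "Qp 0 = (\<lambda>x. 1)"
| "Qp (Suc n) = (\<lambda>x. \<Sum>m\<in>{0..n}. integral {x..1} (Qp m) * Qp (n - m) x)"

fun Pp :: "nat \<Rightarrow> real \<Rightarrow> real" where
  "Pp 0 = (\<lambda>x. 1)"
| "Pp (Suc n) = (\<lambda>x. \<Sum>m\<in>{0..n}.
      (integral {0..x} (Pp m) + integral {x..1} (Qp m)) * Pp (n - m) x)"

definition Tfun :: "real \<Rightarrow> real" where
  "Tfun t = - (1/2) * ln (t\<^sup>2 - t + 1)
            - (sqrt 3 / 3) * (arctan ((2*t - 1) / sqrt 3) - pi / 6)"

text \<open>S is the inverse of t \<mapsto> exp (T t) on [0,\<infinity>).\<close>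
definition Sinv :: "real \<Rightarrow> real" where
  "Sinv y = (THE t. 0 \<le> t \<and> exp (Tfun t) = y)"

end

theory Submission
  imports Defs
begin

text \<open>Bounding P_n and Q_n by the Catalan numbers makes the generating functions fP and fQ
  converge uniformly on [0,1] for z \<le> 1/4, so the defining convolutions can be summed termwise.
  This gives fQ = 1/u and fP = 1/w for u = recipQ z and w = recipP z, where u x = 1 - z \<integral>[x,1] fQ and
  w x = 1 - z (\<integral>[0,x] fP + \<integral>[x,1] fQ),
  which solve u' = z/u and w' = z (1/u - 1/w) with u 1 = 1 and w 0 = u 0.
  The first ODE gives u^2 = 2zx + 1 - 2z. The second is homogeneous, and since
  T' s = -s/(s^2 - s + 1), the function T (w/u) - ln u is a first integral of it;
  hence exp (T (w/u)) = u / u 0, i.e. w/u = S (u / u 0).\<close>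

fun catalan :: "nat \<Rightarrow> real" where
  "catalan 0 = 1"
| "catalan (Suc n) = (\<Sum>m\<in>{0..n}. catalan m * catalan (n - m))"

lemma catalan_nonneg: "0 \<le> catalan n"
proof (induction n rule: less_induct)
  case (less n)
  then show ?case
    by (cases n) (auto intro!: sum_nonneg)
qed

lemma convolution_le_catalan:
  fixes a b :: "nat \<Rightarrow> real"
  assumes "\<And>m. m \<le> n \<Longrightarrow> 0 \<le> a m \<and> a m \<le> catalan m"
    and "\<And>m. m \<le> n \<Longrightarrow> 0 \<le> b m \<and> b m \<le> catalan m"
  shows "0 \<le> (\<Sum>m\<in>{0..n}. a m * b (n - m)) \<and> (\<Sum>m\<in>{0..n}. a m * b (n - m)) \<le> catalan (Suc n)"
  using assms catalan_nonneg by (auto intro!: sum_nonneg sum_mono mult_mono)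

lemma catalan_partial_sum_Suc_le:
  fixes z :: real
  assumes "0 \<le> z"
  shows "(\<Sum>n<Suc N. catalan n * z^n) \<le> 1 + z * (\<Sum>n<N. catalan n * z^n)\<^sup>2"
proof -
  define g where "g i j = (catalan i * z^i) * (catalan j * z^j)" for i j
  have coeff: "catalan (Suc n) * z^Suc n = z * (\<Sum>i\<le>n. g i (n - i))" for n
  proof -
    have "catalan (Suc n) * z^Suc n = z * (\<Sum>i\<le>n. catalan i * catalan (n - i) * z^n)"
      by (simp add: sum_distrib_left sum_distrib_right atLeast0AtMost mult_ac)
    also have "\<dots> = z * (\<Sum>i\<le>n. g i (n - i))"
      by (intro arg_cong[where f = "(*) z"] sum.cong refl) (auto simp: g_def power_add[symmetric])
    finally show ?thesis .
  qed
  have "(\<Sum>n<Suc N. catalan n * z^n) = 1 + z * (\<Sum>n<N. \<Sum>i\<le>n. g i (n - i))"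
    unfolding sum.lessThan_Suc_shift coeff by (simp add: sum_distrib_left)
  also have "(\<Sum>n<N. \<Sum>i\<le>n. g i (n - i)) = (\<Sum>(i,j)\<in>{(i,j). i + j < N}. g i j)"
    by (rule sum.triangle_reindex[symmetric])
  also have "\<dots> \<le> (\<Sum>(i,j)\<in>{..<N}\<times>{..<N}. g i j)"
    by (rule sum_mono2) (auto simp: g_def assms catalan_nonneg)
  also have "\<dots> = (\<Sum>n<N. catalan n * z^n)\<^sup>2"
    by (simp add: g_def power2_eq_square sum_product sum.cartesian_product)
  finally show ?thesis
    using assms by (auto intro: mult_left_mono)
qed

lemma catalan_partial_sum_le_2:
  fixes z :: real
  assumes "0 \<le> z" "z \<le> 1/4"
  shows "(\<Sum>n<N. catalan n * z^n) \<le> 2"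
proof (induction N)
  case (Suc N)
  have "0 \<le> (\<Sum>n<N. catalan n * z^n)"
    using assms by (auto intro!: sum_nonneg simp: catalan_nonneg)
  then have "(\<Sum>n<N. catalan n * z^n)\<^sup>2 \<le> 4"
    using Suc power_mono[of _ 2 2] by fastforce
  then have "z * (\<Sum>n<N. catalan n * z^n)\<^sup>2 \<le> 1"
    using assms mult_mono[of z "1/4" _ 4] by fastforce
  then show ?case
    using catalan_partial_sum_Suc_le[OF assms(1), of N] by linarith
qed simp

lemma summable_catalan_powser:
  fixes z :: real
  assumes "0 \<le> z" "z \<le> 1/4"
  shows "summable (\<lambda>n. catalan n * z^n)"
proof (rule bounded_imp_summable)
  show "0 \<le> catalan n * z^n" for n
    using assms by (simp add: catalan_nonneg)
  show "(\<Sum>k\<le>n. catalan k * z^k) \<le> 2" for n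
    using catalan_partial_sum_le_2[OF assms, of "Suc n"] by (simp add: lessThan_Suc_atMost)
qed

lemma summable_norm_powser_le_catalan:
  fixes z :: real and a :: "nat \<Rightarrow> real"
  assumes "0 \<le> z" "z \<le> 1/4" and "\<And>n. \<bar>a n\<bar> \<le> catalan n"
  shows "summable (\<lambda>n. norm (a n * z^n))"
proof (rule summable_comparison_test'[OF summable_catalan_powser[OF assms(1,2)]])
  show "norm (norm (a n * z^n)) \<le> catalan n * z^n" for n
    using assms mult_right_mono[of "\<bar>a n\<bar>" "catalan n" "z^n"] by (simp add: abs_mult)
qed

lemma powser_convolution_recurrence:
  fixes z :: real and a u :: "nat \<Rightarrow> real"
  assumes "u 0 = 1" and "\<And>n. u (Suc n) = (\<Sum>m\<in>{0..n}. a m * u (n - m))"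
    and "summable (\<lambda>n. norm (a n * z^n))" "summable (\<lambda>n. norm (u n * z^n))"
  shows "(\<Sum>n. u n * z^n) = 1 + z * (\<Sum>n. a n * z^n) * (\<Sum>n. u n * z^n)"
proof -
  have "(\<Sum>n. u n * z^n) = 1 + (\<Sum>n. u (Suc n) * z^n) * z"
    using powser_split_head(1)[OF summable_norm_cancel[OF assms(4)]] assms(1) by simp
  also have "(\<Sum>n. u (Suc n) * z^n) = (\<Sum>n. \<Sum>i\<le>n. (a i * z^i) * (u (n - i) * z^(n - i)))"
    by (intro suminf_cong)
      (auto simp: assms(2) sum_distrib_left sum_distrib_right atLeast0AtMost mult_ac power_add[symmetric]
            intro!: sum.cong)
  also have "\<dots> = (\<Sum>n. a n * z^n) * (\<Sum>n. u n * z^n)"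
    by (rule Cauchy_product[symmetric]) (use assms(3,4) in auto)
  finally show ?thesis
    by (simp add: mult_ac)
qed

lemma integrals_unit_interval_bounds:
  fixes f :: "real \<Rightarrow> real"
  assumes "continuous_on {0..1} f" "\<And>y. y \<in> {0..1} \<Longrightarrow> 0 \<le> f y \<and> f y \<le> C"
    and "x \<in> {0..1}"
  shows "0 \<le> integral {0..x} f" "integral {0..x} f \<le> x * C"
    and "0 \<le> integral {x..1} f" "integral {x..1} f \<le> (1 - x) * C"
proof -
  have "0 \<le> integral {a..b} f \<and> integral {a..b} f \<le> (b - a) * C"
    if "0 \<le> a" "a \<le> b" "b \<le> 1" for a b
  proof -
    have int: "f integrable_on {a..b}"
      using that assms(1) by (intro integrable_continuous_real) (auto elim: continuous_on_subset)
    have "integral {a..b} f \<le> integral {a..b} (\<lambda>_. C)"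
      using that assms(2) by (intro integral_le[OF int]) auto
    then show ?thesis
      using that assms(2) by (auto intro: integral_nonneg[OF int])
  qed
  then show "0 \<le> integral {0..x} f" "integral {0..x} f \<le> x * C"
    and "0 \<le> integral {x..1} f" "integral {x..1} f \<le> (1 - x) * C"
    using assms(3) by force+
qed

lemma continuous_on_integral_to_right_end:
  fixes f :: "real \<Rightarrow> real"
  assumes "continuous_on {a..b} f"
  shows "continuous_on {a..b} (\<lambda>x. integral {x..b} f)"
  using assms indefinite_integral_continuous_1' integrable_continuous_real by blast

lemma continuous_on_integral_from_left_end:
  fixes f :: "real \<Rightarrow> real"
  assumes "continuous_on {a..b} f"
  shows "continuous_on {a..b} (\<lambda>x. integral {a..x} f)"
  using assms indefinite_integral_continuous_1 integrable_continuous_real by blast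

lemma Qp_continuous_bounded:
  "continuous_on {0..1} (Qp n) \<and> (\<forall>x\<in>{0..1}. 0 \<le> Qp n x \<and> Qp n x \<le> catalan n)"
proof (induction n rule: less_induct)
  case (less n)
  show ?case
  proof (cases n)
    case (Suc k)
    have IH: "continuous_on {0..1} (Qp m)" "\<And>y. y \<in> {0..1} \<Longrightarrow> 0 \<le> Qp m y \<and> Qp m y \<le> catalan m"
      if "m \<le> k" for m
      using less Suc that by auto
    have "continuous_on {0..1} (Qp n)"
      using IH(1) by (auto simp: Suc intro!: continuous_intros continuous_on_integral_to_right_end)
    moreover have "0 \<le> Qp n x \<and> Qp n x \<le> catalan n" if x: "x \<in> {0..1}" for x
    proof -
      have "0 \<le> integral {x..1} (Qp m) \<and> integral {x..1} (Qp m) \<le> catalan m" if "m \<le> k" for m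
        using integrals_unit_interval_bounds(3,4)[OF IH[OF that] x] x catalan_nonneg[of m]
        by (auto intro: order_trans[OF _ mult_left_le_one_le])
      then show ?thesis
        unfolding Suc Qp.simps using IH(2) x by (intro convolution_le_catalan) auto
    qed
    ultimately show ?thesis by blast
  qed simp
qed

lemma Qp_continuous: "continuous_on {0..1} (Qp n)"
  and Qp_bounds: "x \<in> {0..1} \<Longrightarrow> 0 \<le> Qp n x \<and> Qp n x \<le> catalan n"
  using Qp_continuous_bounded by blast+

lemma Qp_abs_le: "x \<in> {0..1} \<Longrightarrow> \<bar>Qp n x\<bar> \<le> catalan n"
  using Qp_bounds by fastforce

lemma integral_Qp_bounds:
  "x \<in> {0..1} \<Longrightarrow> 0 \<le> integral {x..1} (Qp n) \<and> integral {x..1} (Qp n) \<le> (1 - x) * catalan n"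
  using integrals_unit_interval_bounds(3,4)[OF Qp_continuous Qp_bounds] by blast

lemma Pp_continuous_bounded:
  "continuous_on {0..1} (Pp n) \<and> (\<forall>x\<in>{0..1}. 0 \<le> Pp n x \<and> Pp n x \<le> catalan n)"
proof (induction n rule: less_induct)
  case (less n)
  show ?case
  proof (cases n)
    case (Suc k)
    have IH: "continuous_on {0..1} (Pp m)" "\<And>y. y \<in> {0..1} \<Longrightarrow> 0 \<le> Pp m y \<and> Pp m y \<le> catalan m"
      if "m \<le> k" for m
      using less Suc that by auto
    have "continuous_on {0..1} (Pp n)"
      using IH(1) Qp_continuous
      by (auto simp: Suc intro!: continuous_intros continuous_on_integral_to_right_end
          continuous_on_integral_from_left_end)
    moreover have "0 \<le> Pp n x \<and> Pp n x \<le> catalan n" if x: "x \<in> {0..1}" for x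
    proof -
      have "0 \<le> integral {0..x} (Pp m) + integral {x..1} (Qp m)
            \<and> integral {0..x} (Pp m) + integral {x..1} (Qp m) \<le> catalan m" if "m \<le> k" for m
        using integrals_unit_interval_bounds(1,2)[OF IH[OF that] x] integral_Qp_bounds[OF x, of m]
        by (auto simp: algebra_simps)
      then show ?thesis
        unfolding Suc Pp.simps using IH(2) x by (intro convolution_le_catalan) auto
    qed
    ultimately show ?thesis by blast
  qed simp
qed

lemma Pp_continuous: "continuous_on {0..1} (Pp n)"
  and Pp_bounds: "x \<in> {0..1} \<Longrightarrow> 0 \<le> Pp n x \<and> Pp n x \<le> catalan n"
  using Pp_continuous_bounded by blast+

lemma Pp_abs_le: "x \<in> {0..1} \<Longrightarrow> \<bar>Pp n x\<bar> \<le> catalan n"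
  using Pp_bounds by fastforce

lemma integral_Pp_bounds:
  "x \<in> {0..1} \<Longrightarrow> 0 \<le> integral {0..x} (Pp n) \<and> integral {0..x} (Pp n) \<le> x * catalan n"
  using integrals_unit_interval_bounds(1,2)[OF Pp_continuous Pp_bounds] by blast

lemma uniformly_dominated_series:
  fixes u :: "nat \<Rightarrow> real \<Rightarrow> real"
  assumes cont: "\<And>n. continuous_on {a..b} (u n)"
    and le: "\<And>n x. x \<in> {a..b} \<Longrightarrow> \<bar>u n x\<bar> \<le> M n" and "summable M"
  shows "continuous_on {a..b} (\<lambda>x. \<Sum>n. u n x)"
    and "(\<lambda>n. integral {a..b} (u n)) sums integral {a..b} (\<lambda>x. \<Sum>n. u n x)"
proof -
  have unif: "uniform_limit {a..b} (\<lambda>N x. \<Sum>n<N. u n x) (\<lambda>x. \<Sum>n. u n x) sequentially"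
    using le \<open>summable M\<close> by (intro Weierstrass_m_test) auto
  have cont_partial: "continuous_on {a..b} (\<lambda>x. \<Sum>n<N. u n x)" for N
    using cont by (intro continuous_on_sum) auto
  show "continuous_on {a..b} (\<lambda>x. \<Sum>n. u n x)"
    by (rule uniform_limit_theorem[OF _ unif]) (simp_all add: cont_partial)
  obtain I J where I: "\<And>N. ((\<lambda>x. \<Sum>n<N. u n x) has_integral I N) {a..b}"
    and J: "((\<lambda>x. \<Sum>n. u n x) has_integral J) {a..b}" and lim: "I \<longlonglongrightarrow> J"
    by (rule uniform_limit_integral[OF unif cont_partial]) auto
  have "((\<lambda>x. \<Sum>n<N. u n x) has_integral (\<Sum>n<N. integral {a..b} (u n))) {a..b}" for N
    using cont by (intro has_integral_sum finite_lessThan integrable_integral integrable_continuous_real)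
  then have "I = (\<lambda>N. \<Sum>n<N. integral {a..b} (u n))"
    using has_integral_unique[OF I] by blast
  then show "(\<lambda>n. integral {a..b} (u n)) sums integral {a..b} (\<lambda>x. \<Sum>n. u n x)"
    using lim integral_unique[OF J] unfolding sums_def by simp
qed

lemma catalan_dominated_powser:
  fixes z :: real and u :: "nat \<Rightarrow> real \<Rightarrow> real"
  assumes z: "0 \<le> z" "z \<le> 1/4"
    and cont: "\<And>n. continuous_on {0..1} (u n)"
    and le: "\<And>n x. x \<in> {0..1} \<Longrightarrow> \<bar>u n x\<bar> \<le> catalan n"
    and sub: "{a..b} \<subseteq> {0..1}"
  shows "continuous_on {a..b} (\<lambda>x. \<Sum>n. u n x * z^n)"
    and "(\<lambda>n. integral {a..b} (u n) * z^n) sums integral {a..b} (\<lambda>x. \<Sum>n. u n x * z^n)"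
proof -
  have cont': "continuous_on {a..b} (\<lambda>x. u n x * z^n)" for n
    using continuous_on_subset[OF cont sub] by (intro continuous_intros)
  have le': "\<bar>u n x * z^n\<bar> \<le> catalan n * z^n" if "x \<in> {a..b}" for n x
    using le[of x n] that sub z by (auto simp: abs_mult intro: mult_right_mono)
  note series = uniformly_dominated_series[OF cont' le' summable_catalan_powser[OF z]]
  show "continuous_on {a..b} (\<lambda>x. \<Sum>n. u n x * z^n)"
    by (rule series(1))
  show "(\<lambda>n. integral {a..b} (u n) * z^n) sums integral {a..b} (\<lambda>x. \<Sum>n. u n x * z^n)"
    using series(2) by simp
qed

definition fQ :: "real \<Rightarrow> real \<Rightarrow> real" where
  "fQ z x = (\<Sum>n. Qp n x * z^n)"

definition fP :: "real \<Rightarrow> real \<Rightarrow> real" where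
  "fP z x = (\<Sum>n. Pp n x * z^n)"

lemma fQ_continuous: "0 \<le> z \<Longrightarrow> z \<le> 1/4 \<Longrightarrow> continuous_on {0..1} (fQ z)"
  unfolding fQ_def[abs_def] by (rule catalan_dominated_powser(1)[OF _ _ Qp_continuous Qp_abs_le]) auto

lemma fP_continuous: "0 \<le> z \<Longrightarrow> z \<le> 1/4 \<Longrightarrow> continuous_on {0..1} (fP z)"
  unfolding fP_def[abs_def] by (rule catalan_dominated_powser(1)[OF _ _ Pp_continuous Pp_abs_le]) auto

lemma fQ_ge_1:
  assumes "0 \<le> z" "z \<le> 1/4" "x \<in> {0..1}"
  shows "1 \<le> fQ z x"
proof -
  have "(\<Sum>n<1. Qp n x * z^n) \<le> fQ z x"
    unfolding fQ_def using assms Qp_bounds[OF assms(3)]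
    by (intro sum_le_suminf summable_norm_cancel[OF summable_norm_powser_le_catalan] Qp_abs_le) auto
  then show ?thesis by simp
qed

lemma fP_ge_1:
  assumes "0 \<le> z" "z \<le> 1/4" "x \<in> {0..1}"
  shows "1 \<le> fP z x"
proof -
  have "(\<Sum>n<1. Pp n x * z^n) \<le> fP z x"
    unfolding fP_def using assms Pp_bounds[OF assms(3)]
    by (intro sum_le_suminf summable_norm_cancel[OF summable_norm_powser_le_catalan] Pp_abs_le) auto
  then show ?thesis by simp
qed

definition recipQ :: "real \<Rightarrow> real \<Rightarrow> real" where
  "recipQ z x = 1 - z * integral {x..1} (fQ z)"

definition recipP :: "real \<Rightarrow> real \<Rightarrow> real" where
  "recipP z x = 1 - z * (integral {0..x} (fP z) + integral {x..1} (fQ z))"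

lemma fQ_mult_recipQ:
  assumes z: "0 \<le> z" "z \<le> 1/4" and x: "x \<in> {0..1}"
  shows "fQ z x * recipQ z x = 1"
proof -
  have bound: "\<bar>integral {x..1} (Qp n)\<bar> \<le> catalan n" for n
    using integral_Qp_bounds[OF x, of n] x catalan_nonneg[of n]
    by (auto intro: order_trans[OF _ mult_left_le_one_le])
  have "(\<lambda>n. integral {x..1} (Qp n) * z^n) sums integral {x..1} (fQ z)"
    unfolding fQ_def[abs_def] using x by (intro catalan_dominated_powser(2)[OF z Qp_continuous Qp_abs_le]) auto
  moreover have "fQ z x = 1 + z * (\<Sum>n. integral {x..1} (Qp n) * z^n) * fQ z x"
    unfolding fQ_def
    by (rule powser_convolution_recurrence[OF _ _ summable_norm_powser_le_catalan[OF z bound]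
          summable_norm_powser_le_catalan[OF z Qp_abs_le[OF x]]]) simp_all
  ultimately show ?thesis
    unfolding recipQ_def by (simp add: sums_iff algebra_simps)
qed

lemma fP_mult_recipP:
  assumes z: "0 \<le> z" "z \<le> 1/4" and x: "x \<in> {0..1}"
  shows "fP z x * recipP z x = 1"
proof -
  define a where "a n = integral {0..x} (Pp n) + integral {x..1} (Qp n)" for n
  have bound: "\<bar>a n\<bar> \<le> catalan n" for n
    using integral_Qp_bounds[OF x, of n] integral_Pp_bounds[OF x, of n] by (auto simp: a_def algebra_simps)
  have "(\<lambda>n. integral {0..x} (Pp n) * z^n) sums integral {0..x} (fP z)"
    unfolding fP_def[abs_def] using x by (intro catalan_dominated_powser(2)[OF z Pp_continuous Pp_abs_le]) auto
  moreover have "(\<lambda>n. integral {x..1} (Qp n) * z^n) sums integral {x..1} (fQ z)"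
    unfolding fQ_def[abs_def] using x by (intro catalan_dominated_powser(2)[OF z Qp_continuous Qp_abs_le]) auto
  ultimately have "(\<lambda>n. a n * z^n) sums (integral {0..x} (fP z) + integral {x..1} (fQ z))"
    unfolding a_def distrib_right by (rule sums_add)
  moreover have "fP z x = 1 + z * (\<Sum>n. a n * z^n) * fP z x"
    unfolding fP_def
    by (rule powser_convolution_recurrence[OF _ _ summable_norm_powser_le_catalan[OF z bound]
          summable_norm_powser_le_catalan[OF z Pp_abs_le[OF x]]]) (simp_all add: a_def)
  ultimately show ?thesis
    unfolding recipP_def by (simp add: sums_iff algebra_simps)
qed

lemma sq_minus_self_plus_one_pos: "0 < t\<^sup>2 - t + (1::real)"
proof -
  have "t\<^sup>2 - t + 1 = (t - 1/2)\<^sup>2 + 3/4"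
    by (simp add: power2_eq_square algebra_simps)
  moreover have "0 \<le> (t - 1/2)\<^sup>2"
    by simp
  ultimately show ?thesis
    by linarith
qed

lemma Tfun_has_derivative: "(Tfun has_real_derivative - t / (t\<^sup>2 - t + 1)) (at t)"
  unfolding Tfun_def[abs_def] using sq_minus_self_plus_one_pos[of t]
  by (auto intro!: derivative_eq_intros simp: divide_simps) (simp_all add: power2_eq_square algebra_simps)

lemma Tfun_1: "Tfun 1 = 0"
proof -
  have "arctan (1 / sqrt 3) = pi / 6"
    using arctan_tan[of "pi/6"] tan_30 by simp
  then show ?thesis
    unfolding Tfun_def by simp
qed

lemma Tfun_strict_antimono:
  assumes "0 \<le> a" "a < b"
  shows "Tfun b < Tfun a"
proof (rule DERIV_neg_imp_decreasing_open[OF assms(2)])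
  show "\<exists>y. (Tfun has_real_derivative y) (at x) \<and> y < 0" if "a < x" "x < b" for x
    using Tfun_has_derivative sq_minus_self_plus_one_pos[of x] that assms
    by (auto intro!: exI divide_pos_pos)
  show "continuous_on {a..b} Tfun"
    using Tfun_has_derivative by (meson DERIV_isCont continuous_at_imp_continuous_on)
qed

lemma Sinv_eqI:
  assumes "0 \<le> t" "exp (Tfun t) = y"
  shows "Sinv y = t"
  unfolding Sinv_def
proof (rule the_equality)
  show "0 \<le> t \<and> exp (Tfun t) = y"
    using assms by blast
  show "s = t" if "0 \<le> s \<and> exp (Tfun s) = y" for s
    using that assms Tfun_strict_antimono by (metis exp_inj_iff linorder_neqE_linordered_idom less_irrefl)
qed

lemma ode_sqrt_solution:
  fixes u :: "real \<Rightarrow> real"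
  assumes deriv: "\<And>y. y \<in> {a..b} \<Longrightarrow> (u has_real_derivative c / u y) (at y within {a..b})"
    and pos: "\<And>y. y \<in> {a..b} \<Longrightarrow> 0 < u y" and "u b = 1" and x: "x \<in> {a..b}"
  shows "u x = sqrt (1 - 2 * c * (b - x))"
proof -
  have const: "((\<lambda>y. u y * u y - 2 * c * y) has_real_derivative 0) (at y within {a..b})"
    if "y \<in> {a..b}" for y
    using pos[OF that] by (auto intro!: derivative_eq_intros deriv that)
  obtain k where k: "\<And>y. y \<in> {a..b} \<Longrightarrow> u y * u y - 2 * c * y = k"
    using has_field_derivative_zero_constant[OF convex_real_interval(5) const] by blast
  have "b \<in> {a..b}"
    using x by simp
  then have "(u x)\<^sup>2 = 1 - 2 * c * (b - x)"
    using k[OF x] k[of b] \<open>u b = 1\<close> by (simp add: power2_eq_square algebra_simps)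
  then show ?thesis
    using pos[OF x] by (simp add: real_sqrt_unique)
qed

lemma ode_Tfun_first_integral:
  fixes u w :: "real \<Rightarrow> real"
  assumes du: "\<And>y. y \<in> {a..b} \<Longrightarrow> (u has_real_derivative c / u y) (at y within {a..b})"
    and dw: "\<And>y. y \<in> {a..b} \<Longrightarrow> (w has_real_derivative c * (1 / u y - 1 / w y)) (at y within {a..b})"
    and u_pos: "\<And>y. y \<in> {a..b} \<Longrightarrow> 0 < u y" and w_pos: "\<And>y. y \<in> {a..b} \<Longrightarrow> 0 < w y"
    and "w a = u a" and x: "x \<in> {a..b}"
  shows "exp (Tfun (w x / u x)) = u x / u a"
proof -
  have const: "((\<lambda>y. Tfun (w y / u y) - ln (u y)) has_real_derivative 0) (at y within {a..b})"
    if y: "y \<in> {a..b}" for y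
  proof -
    define U W where "U = u y" and "W = w y"
    have pos: "0 < U" "0 < W"
      using u_pos[OF y] w_pos[OF y] by (simp_all add: U_def W_def)
    define D where "D = W * W - W * U + U * U"
    have "0 < (W / U)\<^sup>2 - W / U + 1"
      by (rule sq_minus_self_plus_one_pos)
    then have D: "0 < D"
      using pos by (simp add: D_def power2_eq_square field_simps)
    have deriv: "((\<lambda>y. Tfun (w y / u y) - ln (u y)) has_real_derivative
        - (W / U) / ((W / U)\<^sup>2 - W / U + 1) * ((c * (1 / U - 1 / W) * U - W * (c / U)) / (U * U))
        - 1 / U * (c / U)) (at y within {a..b})"
      unfolding U_def W_def using u_pos[OF y]
      by (intro DERIV_diff DERIV_chain2[OF Tfun_has_derivative] DERIV_chain2[OF DERIV_ln_divide]
          DERIV_divide du dw y) auto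
    have Tfun': "- (W / U) / ((W / U)\<^sup>2 - W / U + 1) = - (W * U) / D"
      using pos by (simp add: D_def power2_eq_square field_simps)
    have quotient': "(c * (1 / U - 1 / W) * U - W * (c / U)) / (U * U) = - c * D / (W * U * U * U)"
      using pos by (simp add: D_def field_simps)
    have "- (W * U) / D * (- c * D / (W * U * U * U)) - 1 / U * (c / U) = 0"
      using pos D by (simp add: field_simps)
    then show ?thesis
      using DERIV_cong[OF deriv] unfolding Tfun' quotient' by blast
  qed
  obtain k where k: "\<And>y. y \<in> {a..b} \<Longrightarrow> Tfun (w y / u y) - ln (u y) = k"
    using has_field_derivative_zero_constant[OF convex_real_interval(5) const] by blast
  have "a \<in> {a..b}"
    using x by simp
  then have "Tfun (w x / u x) = ln (u x) - ln (u a)"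
    using k[OF x] k[OF \<open>a \<in> {a..b}\<close>] \<open>w a = u a\<close> u_pos[OF \<open>a \<in> {a..b}\<close>] by (simp add: Tfun_1)
  then show ?thesis
    using u_pos x \<open>a \<in> {a..b}\<close> by (simp add: exp_diff)
qed

lemma recipQ_pos:
  assumes "0 \<le> z" "z \<le> 1/4" "x \<in> {0..1}"
  shows "0 < recipQ z x"
proof -
  have "0 < fQ z x * recipQ z x"
    using fQ_mult_recipQ[OF assms] by simp
  then show ?thesis
    using fQ_ge_1[OF assms] by (simp add: zero_less_mult_iff)
qed

lemma recipP_pos:
  assumes "0 \<le> z" "z \<le> 1/4" "x \<in> {0..1}"
  shows "0 < recipP z x"
proof -
  have "0 < fP z x * recipP z x"
    using fP_mult_recipP[OF assms] by simp
  then show ?thesis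
    using fP_ge_1[OF assms] by (simp add: zero_less_mult_iff)
qed

lemma fQ_eq_inverse_recipQ:
  assumes "0 \<le> z" "z \<le> 1/4" "x \<in> {0..1}"
  shows "fQ z x = 1 / recipQ z x"
  using fQ_mult_recipQ[OF assms] recipQ_pos[OF assms] by (simp add: eq_divide_eq)

lemma fP_eq_inverse_recipP:
  assumes "0 \<le> z" "z \<le> 1/4" "x \<in> {0..1}"
  shows "fP z x = 1 / recipP z x"
  using fP_mult_recipP[OF assms] recipP_pos[OF assms] by (simp add: eq_divide_eq)

lemma recipQ_has_derivative:
  assumes z: "0 \<le> z" "z \<le> 1/4" and x: "x \<in> {0..1}"
  shows "(recipQ z has_real_derivative z / recipQ z x) (at x within {0..1})"
proof -
  have "((\<lambda>y. integral {y..1} (fQ z)) has_real_derivative - fQ z x) (at x within {0..1})"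
    by (rule integral_has_real_derivative'[OF fQ_continuous[OF z] x])
  then have "(recipQ z has_real_derivative 0 - z * - fQ z x) (at x within {0..1})"
    unfolding recipQ_def[abs_def] by (intro DERIV_diff DERIV_const DERIV_cmult)
  then show ?thesis
    by (simp add: fQ_eq_inverse_recipQ[OF z x])
qed

lemma recipP_has_derivative:
  assumes z: "0 \<le> z" "z \<le> 1/4" and x: "x \<in> {0..1}"
  shows "(recipP z has_real_derivative z * (1 / recipQ z x - 1 / recipP z x)) (at x within {0..1})"
proof -
  have "((\<lambda>y. integral {0..y} (fP z)) has_real_derivative fP z x) (at x within {0..1})"
    by (rule integral_has_real_derivative[OF fP_continuous[OF z] x])
  moreover have "((\<lambda>y. integral {y..1} (fQ z)) has_real_derivative - fQ z x) (at x within {0..1})"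
    by (rule integral_has_real_derivative'[OF fQ_continuous[OF z] x])
  ultimately have "(recipP z has_real_derivative 0 - z * (fP z x + - fQ z x)) (at x within {0..1})"
    unfolding recipP_def[abs_def] by (intro DERIV_diff DERIV_const DERIV_cmult DERIV_add)
  then show ?thesis
    by (simp add: fQ_eq_inverse_recipQ[OF z x] fP_eq_inverse_recipP[OF z x] algebra_simps)
qed

lemma recipQ_eq_sqrt:
  assumes z: "0 \<le> z" "z \<le> 1/4" and x: "x \<in> {0..1}"
  shows "recipQ z x = sqrt (2*z*x + 1 - 2*z)"
proof -
  have "recipQ z 1 = 1"
    by (simp add: recipQ_def)
  then have "recipQ z x = sqrt (1 - 2 * z * (1 - x))"
    by (intro ode_sqrt_solution[where a = 0] recipQ_has_derivative[OF z] recipQ_pos[OF z] x)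
  then show ?thesis
    by (simp add: algebra_simps)
qed

lemma fP_closed_form:
  assumes z: "0 \<le> z" "z \<le> 1/4" and x: "x \<in> {0..1}"
  shows "fP z x = 1 / (sqrt (2*z*x + 1 - 2*z) * Sinv (sqrt ((2*z*x + 1 - 2*z) / (1 - 2*z))))"
proof -
  have "recipP z 0 = recipQ z 0"
    by (simp add: recipP_def recipQ_def)
  then have "exp (Tfun (recipP z x / recipQ z x)) = recipQ z x / recipQ z 0"
    by (intro ode_Tfun_first_integral[where c = z and u = "recipQ z" and w = "recipP z" and a = 0 and b = 1] recipQ_has_derivative[OF z] recipP_has_derivative[OF z]
          recipQ_pos[OF z] recipP_pos[OF z] x)
  also have "\<dots> = sqrt ((2*z*x + 1 - 2*z) / (1 - 2*z))"
    using recipQ_eq_sqrt[OF z] x by (simp add: real_sqrt_divide)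
  finally have "Sinv (sqrt ((2*z*x + 1 - 2*z) / (1 - 2*z))) = recipP z x / recipQ z x"
    using recipP_pos[OF z x] recipQ_pos[OF z x] by (intro Sinv_eqI) auto
  then have "recipP z x = sqrt (2*z*x + 1 - 2*z) * Sinv (sqrt ((2*z*x + 1 - 2*z) / (1 - 2*z)))"
    using recipQ_pos[OF z x] recipQ_eq_sqrt[OF z x] by simp
  then show ?thesis
    by (simp add: fP_eq_inverse_recipP[OF z x])
qed

theorem mainTheorem5:
  fixes z x :: real
  assumes "0 < z" "z < 1/4" "0 \<le> x" "x \<le> 1"
  shows "(\<lambda>n. Pp n x * z ^ n) sums
           (1 / (sqrt (2*z*x + 1 - 2*z) * Sinv (sqrt ((2*z*x + 1 - 2*z) / (1 - 2*z)))))"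
proof -
  have z: "0 \<le> z" "z \<le> 1/4" and x: "x \<in> {0..1}"
    using assms by auto
  have "(\<lambda>n. Pp n x * z ^ n) sums fP z x"
    unfolding fP_def
    by (rule summable_sums[OF summable_norm_cancel[OF summable_norm_powser_le_catalan[OF z Pp_abs_le[OF x]]]])
  then show ?thesis
    by (simp only: fP_closed_form[OF z x])
qed

end
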